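(* Let $\Sigma$ be an alphabet, let $\tau \in \mathcal{T}(\Sigma)$, let $t, t' \in \mathcal{T}(\Sigma)$, and let $a_1 \neq a_2$ be two letters of $\Sigma$. If $\sigma_{a_i}^{\tau}(t) = \sigma_{a_i}^{\tau}(t')$ for $i = 1, 2$, then $t = t'$.
   Context: Let $\Sigma$ be an alphabet not containing $0,1$. A binary tree over $\Sigma$ is a finite set $t \subseteq \{0,1\}^*\Sigma$ such that for any $ua, vb \in t$ with $ua \neq vb$, $u$ is not a prefix of $v$ and $v$ is not a prefix of $u$; $\mathcal{T}(\Sigma)$ is the set of such trees, $\mathbf 0=\emptyset$, and each letter $a$ is identified with the tree $\{a\}$. The operation is $t\star t' = 0.t\cup 1.t'$. Every map $h\colon\Sigma\to\mathcal{T}(\Sigma)$ extends uniquely to an endomorphism of $\langle\mathcal{T}(\Sigma),\star\rangle$ (a map $h$ with $h(t\star t')=h(t)\star h(t')$; it satisfies $h(\mathbf 0)=\mathbf 0$). For $a\in\Sigma$ and $\tau\in\mathcal{T}(\Sigma)$, the grafting $\sigma_a^{\tau}$ is the endomorphism with $\sigma_a^\tau(a)=\tau$ and $\sigma_a^\tau(b)=b$ for $b\in\Sigma$, $b\neq a$. *)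

theory Defs
  imports "HOL-Library.Sublist"
begin

text \<open>Words of {0,1}^* Sigma are represented as pairs (u, a) with u a bool list
  (False = 0, True = 1) and a a letter of the alphabet, i.e. an element of type 'a.\<close>

type_synonym 'a bword = "bool list \<times> 'a"

definition is_btree :: "'a bword set \<Rightarrow> bool" where
  "is_btree t \<longleftrightarrow> finite t \<and>
     (\<forall>u a v b. (u, a) \<in> t \<longrightarrow> (v, b) \<in> t \<longrightarrow> (u, a) \<noteq> (v, b) \<longrightarrow>
        \<not> prefix u v \<and> \<not> prefix v u)"

definition btrees :: "'a bword set set" where
  "btrees = {t. is_btree t}"

definition letter :: "'a \<Rightarrow> 'a bword set" where
  "letter a = {([], a)}"

definition bstar :: "'a bword set \<Rightarrow> 'a bword set \<Rightarrow> 'a bword set" where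
  "bstar t t' = {(False # u, a) | u a. (u, a) \<in> t} \<union> {(True # u, a) | u a. (u, a) \<in> t'}"

text \<open>The unique endomorphism extending h : Sigma -> T(Sigma): every leaf a at
  address u is replaced by the tree h a grafted at u.\<close>
definition extend :: "('a \<Rightarrow> 'a bword set) \<Rightarrow> 'a bword set \<Rightarrow> 'a bword set" where
  "extend h t = {(u @ v, b) | u a v b. (u, a) \<in> t \<and> (v, b) \<in> h a}"

definition graft :: "'a \<Rightarrow> 'a bword set \<Rightarrow> 'a bword set \<Rightarrow> 'a bword set" where
  "graft a \<tau> = extend (\<lambda>b. if b = a then \<tau> else letter b)"

lemma extend_letter: "extend h (letter a) = h a"
  by (auto simp: extend_def letter_def)

lemma extend_empty: "extend h {} = {}"
  by (simp add: extend_def)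

end

theory Submission
  imports Defs
begin

text \<open>A leaf \<open>(u, b)\<close> of \<open>t\<close> with \<open>b \<noteq> a\<^sub>1\<close> survives the grafting at \<open>a\<^sub>1\<close>. If it were not
  a leaf of \<open>t'\<close>, it would stem from a leaf \<open>(u', a\<^sub>1)\<close> of \<open>t'\<close> with \<open>u'\<close> a prefix of \<open>u\<close>.
  That leaf survives the grafting at \<open>a\<^sub>2\<close>, so it is also produced from \<open>t\<close>; as the addresses
  in \<open>t\<close> form an antichain, this is only possible if \<open>u' = u\<close> and \<open>\<tau>\<close> is the single letter
  \<open>a\<^sub>1\<close>, contradicting \<open>b \<noteq> a\<^sub>1\<close>. Leaves labelled \<open>a\<^sub>1\<close> are handled symmetrically with the
  roles of \<open>a\<^sub>1\<close> and \<open>a\<^sub>2\<close> exchanged.\<close>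

lemma mem_graft_iff:
  "(p, c) \<in> graft a \<tau> t \<longleftrightarrow>
     (p, c) \<in> t \<and> c \<noteq> a \<or> (\<exists>u v. p = u @ v \<and> (u, a) \<in> t \<and> (v, c) \<in> \<tau>)"
  by (auto simp: graft_def extend_def letter_def split: if_splits)

lemma btree_prefix_eq:
  assumes "is_btree t" "(u, a) \<in> t" "(v, b) \<in> t" "prefix u v"
  shows "u = v" "a = b"
  using assms unfolding is_btree_def by blast+

lemma leaf_mem_of_graft_eq:
  assumes tau: "is_btree \<tau>" and t: "is_btree t"
    and "a\<^sub>1 \<noteq> a\<^sub>2"
    and eq\<^sub>1: "graft a\<^sub>1 \<tau> t = graft a\<^sub>1 \<tau> t'"
    and eq\<^sub>2: "graft a\<^sub>2 \<tau> t = graft a\<^sub>2 \<tau> t'"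
    and ub: "(u, b) \<in> t" and "b \<noteq> a\<^sub>1"
  shows "(u, b) \<in> t'"
proof (rule ccontr)
  assume "(u, b) \<notin> t'"
  moreover have "(u, b) \<in> graft a\<^sub>1 \<tau> t'"
    using ub \<open>b \<noteq> a\<^sub>1\<close> by (simp flip: eq\<^sub>1 add: mem_graft_iff)
  ultimately obtain u' v where u: "u = u' @ v" and "(u', a\<^sub>1) \<in> t'" and vb: "(v, b) \<in> \<tau>"
    by (auto simp: mem_graft_iff)
  then have "(u', a\<^sub>1) \<in> graft a\<^sub>2 \<tau> t"
    using \<open>a\<^sub>1 \<noteq> a\<^sub>2\<close> by (simp add: eq\<^sub>2 mem_graft_iff)
  then consider "(u', a\<^sub>1) \<in> t" | w x where "u' = w @ x" "(w, a\<^sub>2) \<in> t" "(x, a\<^sub>1) \<in> \<tau>"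
    by (auto simp: mem_graft_iff)
  then show False
  proof cases
    case 1
    then show False using btree_prefix_eq(2)[OF t 1 ub] u \<open>b \<noteq> a\<^sub>1\<close> by simp
  next
    case (2 w x)
    then have "w = u" using btree_prefix_eq(1)[OF t 2(2) ub] u by simp
    with u 2(1) have "x = []" "v = []" by auto
    then show False using btree_prefix_eq(2)[OF tau 2(3) vb] \<open>b \<noteq> a\<^sub>1\<close> by simp
  qed
qed

lemma btree_subset_of_graft_eq:
  assumes "is_btree \<tau>" "is_btree t" "a\<^sub>1 \<noteq> a\<^sub>2"
    and "graft a\<^sub>1 \<tau> t = graft a\<^sub>1 \<tau> t'"
    and "graft a\<^sub>2 \<tau> t = graft a\<^sub>2 \<tau> t'"
  shows "t \<subseteq> t'"
proof
  fix p assume "p \<in> t"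
  obtain u c where p: "p = (u, c)" by fastforce
  show "p \<in> t'"
  proof (cases "c = a\<^sub>1")
    case True
    then show ?thesis
      using leaf_mem_of_graft_eq[of \<tau> t a\<^sub>2 a\<^sub>1] assms \<open>p \<in> t\<close> p by auto
  next
    case False
    then show ?thesis
      using leaf_mem_of_graft_eq[of \<tau> t a\<^sub>1 a\<^sub>2] assms \<open>p \<in> t\<close> p by auto
  qed
qed

theorem mainTheorem2:
  fixes \<tau> t t' :: "'a bword set" and a1 a2 :: 'a
  assumes "\<tau> \<in> btrees" and "t \<in> btrees" and "t' \<in> btrees"
    and "a1 \<noteq> a2"
    and "graft a1 \<tau> t = graft a1 \<tau> t'"
    and "graft a2 \<tau> t = graft a2 \<tau> t'"
  shows "t = t'"
proof (rule subset_antisym)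
  have "is_btree \<tau>" "is_btree t" "is_btree t'"
    using assms(1-3) by (simp_all add: btrees_def)
  then show "t \<subseteq> t'" "t' \<subseteq> t"
    using btree_subset_of_graft_eq assms(4-6) by metis+
qed

end
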